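(* Let $L$ be a right Bol loop, i.e. a loop satisfying $x((yz)y)=((xy)z)y$ for all $x,y,z\in L$. If $L$ admits an anti-automorphism, then $L$ is a Moufang loop.
   Context: A loop is a set with a binary operation and a neutral element $1$ such that for all $a,b$ the equations $ax=b$ and $ya=b$ have unique solutions. An anti-automorphism of $L$ is a bijection $\varphi:L\to L$ with $\varphi(xy)=\varphi(y)\varphi(x)$ for all $x,y$. A left Bol loop satisfies $(x(yx))z=x(y(xz))$; a Moufang loop is a loop that is both a right Bol loop and a left Bol loop. *)

theory Defs
  imports Main
begin

definition is_loop :: "('a \<Rightarrow> 'a \<Rightarrow> 'a) \<Rightarrow> 'a \<Rightarrow> bool" where
  "is_loop m e \<longleftrightarrow>
     (\<forall>x. m e x = x \<and> m x e = x) \<and>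
     (\<forall>a b. \<exists>!x. m a x = b) \<and>
     (\<forall>a b. \<exists>!y. m y a = b)"

definition right_bol :: "('a \<Rightarrow> 'a \<Rightarrow> 'a) \<Rightarrow> bool" where
  "right_bol m \<longleftrightarrow> (\<forall>x y z. m x (m (m y z) y) = m (m (m x y) z) y)"

definition left_bol :: "('a \<Rightarrow> 'a \<Rightarrow> 'a) \<Rightarrow> bool" where
  "left_bol m \<longleftrightarrow> (\<forall>x y z. m (m x (m y x)) z = m x (m y (m x z)))"

definition moufang_loop :: "('a \<Rightarrow> 'a \<Rightarrow> 'a) \<Rightarrow> 'a \<Rightarrow> bool" where
  "moufang_loop m e \<longleftrightarrow> is_loop m e \<and> right_bol m \<and> left_bol m"

definition anti_automorphism :: "('a \<Rightarrow> 'a \<Rightarrow> 'a) \<Rightarrow> ('a \<Rightarrow> 'a) \<Rightarrow> bool" where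
  "anti_automorphism m \<phi> \<longleftrightarrow> bij \<phi> \<and> (\<forall>x y. \<phi> (m x y) = m (\<phi> y) (\<phi> x))"

end

theory Submission
  imports Defs
begin

text \<open>An anti-automorphism maps the right Bol identity for \<open>x, y, z\<close> onto the left Bol
  identity for \<open>\<phi> y, \<phi> z, \<phi> x\<close>; surjectivity of \<phi> makes these instances exhaustive.\<close>

lemma left_bol_if_anti_automorphism:
  assumes "anti_automorphism m \<phi>" and "right_bol m"
  shows "left_bol m"
  unfolding left_bol_def
proof (intro allI)
  fix a b c
  have surj: "surj \<phi>" and anti: "\<And>x y. \<phi> (m x y) = m (\<phi> y) (\<phi> x)"
    using assms(1) unfolding anti_automorphism_def by (auto dest: bij_is_surj)
  obtain x y z where "a = \<phi> y" "b = \<phi> z" "c = \<phi> x"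
    using surj by (metis surjD)
  moreover have "\<phi> (m x (m (m y z) y)) = \<phi> (m (m (m x y) z) y)"
    using assms(2) unfolding right_bol_def by simp
  ultimately show "m (m a (m b a)) c = m a (m b (m a c))"
    by (simp add: anti)
qed

theorem proposition2p1:
  fixes m :: "'a \<Rightarrow> 'a \<Rightarrow> 'a" and e :: 'a
  assumes "is_loop m e" and "right_bol m"
    and "\<exists>\<phi>. anti_automorphism m \<phi>"
  shows "moufang_loop m e"
proof -
  obtain \<phi> where "anti_automorphism m \<phi>"
    using assms(3) by blast
  then have "left_bol m"
    using assms(2) by (rule left_bol_if_anti_automorphism)
  then show ?thesis
    using assms(1,2) unfolding moufang_loop_def by blast
qed

end
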